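(* Let $Y$ be a nonnegative random variable with Laplace transform $L(s)=\mathbb{E}e^{-sY}$, $s\ge 0$. Suppose that for every $n\in\mathbb{N}$ there is a function $g_n$ with the following properties: (i) $g_n$ is the Laplace transform of a probability distribution on $[0,\infty)$; (ii) $g_n$ is a continuous, strictly decreasing bijection of $[0,\infty)$ onto $(0,1]$, with inverse function $g_n^{-1}$; (iii) $L(s)=\bigl[L(-\log g_n(s))\bigr]^n$ for all $s\ge 0$. Let $h$ be the Laplace transform of a nonnegative random variable and suppose there is $a>0$ with $$\sup_{s>0}\frac{|h(s)-L(s)|}{s^a}<\infty .$$ Suppose further that $$\sup_{s>0}\frac{n\,s^a}{\bigl|g_n^{-1}(e^{-s})\bigr|^a}\longrightarrow 0\quad (n\to\infty).$$ For each $n$, let $\tilde X_1(n),\dots,\tilde X_n(n)$ be i.i.d. random variables with Laplace transform $s\mapsto h(-\log g_n(s))$ (the $g_n$-normalizations of i.i.d. random variables $X_1,X_2,\dots$ with Laplace transform $h$; this function is assumed to be a Laplace transform of a probability distribution). Then $$\sum_{j=1}^n \tilde X_j(n)\xrightarrow{d} Y\quad (n\to\infty).$$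
   Context: A nonnegative random variable with Laplace transform $L$ is called casual stable if for every $n\in\mathbb{N}$ there is the Laplace transform $g_n$ of a probability distribution on $[0,\infty)$ such that $L(s)=[L(-\log g_n(s))]^n$ for all $s\ge0$. Given a nonnegative random variable $X$ with Laplace transform $h$, its $g_n$-normalization is a random variable $\tilde X$ with Laplace transform $h(-\log g_n(s))$ (interpretation: each unit of $X$ is replaced by an independent random contribution with Laplace transform $g_n$). *)

theory Defs
  imports "HOL-Probability.Probability"
begin

definition is_laplace_transform :: "(real \<Rightarrow> real) \<Rightarrow> bool" where
  "is_laplace_transform \<phi> \<longleftrightarrow>
     (\<exists>\<mu>::real measure. prob_space \<mu> \<and> sets \<mu> = sets borel \<and> (AE x in \<mu>. 0 \<le> x) \<and>
        (\<forall>s\<ge>0. \<phi> s = (\<integral>x. exp (- (s * x)) \<partial>\<mu>)))"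

end

theory Submission imports Defs "HOL-Analysis.Weierstrass_Theorems" begin

(* Write S_n for the normalized row sum.  By independence, the
   Laplace transform of S_n is  h(u_n(s))^n  with  u_n(s) = -log g_n(s), while
   stability gives  L(s) = L(u_n(s))^n.  Since h and L take values in [0,1],
   |h(u)^n - L(u)^n| <= n |h(u) - L(u)| <= C n u^a, and the growth hypothesis on
   the inverse of g_n bounds  n u_n(s)^a  by  r_n s^a  with  r_n -> 0.  Hence the
   Laplace transforms of S_n converge pointwise to L.
   A continuity theorem for Laplace transforms turns this into weak convergence:
   convergence at s = 0,1,2,... is convergence of all moments of the [0,1]-valued
   variables exp(-S_n); by the Weierstrass approximation theorem this yields
   convergence of E phi(exp(-S_n)) for every continuous phi, and the continuous
   step functions used by the library's weak-convergence criterion are of this form. *)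

lemma laplace_integral_bounds:
  fixes X :: "'a \<Rightarrow> real" and s :: real
  assumes "prob_space \<mu>" "X \<in> borel_measurable \<mu>" "AE x in \<mu>. 0 \<le> X x" "0 \<le> s"
  shows "integrable \<mu> (\<lambda>x. exp (- (s * X x)))"
    and "0 \<le> (\<integral>x. exp (- (s * X x)) \<partial>\<mu>)"
    and "(\<integral>x. exp (- (s * X x)) \<partial>\<mu>) \<le> 1"
proof -
  interpret prob_space \<mu> by fact
  have bound: "AE x in \<mu>. norm (exp (- (s * X x))) \<le> 1"
    using assms(3) by eventually_elim (use assms(4) in simp)
  show int: "integrable \<mu> (\<lambda>x. exp (- (s * X x)))"
    by (rule integrable_const_bound[OF bound]) (use assms(2) in simp)
  show "0 \<le> (\<integral>x. exp (- (s * X x)) \<partial>\<mu>)" by simp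
  have "(\<integral>x. exp (- (s * X x)) \<partial>\<mu>) \<le> (\<integral>x. 1 \<partial>\<mu>)"
    by (rule integral_mono_AE[OF int]) (use bound in auto)
  then show "(\<integral>x. exp (- (s * X x)) \<partial>\<mu>) \<le> 1" by (simp add: prob_space)
qed

lemma laplace_transform_range:
  assumes "is_laplace_transform \<phi>"
  shows "\<phi> 0 = 1" and "\<And>s. 0 \<le> s \<Longrightarrow> 0 \<le> \<phi> s \<and> \<phi> s \<le> 1"
proof -
  obtain \<mu> :: "real measure" where \<mu>: "prob_space \<mu>" "sets \<mu> = sets borel"
    "AE x in \<mu>. 0 \<le> x" "\<forall>s\<ge>0. \<phi> s = (\<integral>x. exp (- (s * x)) \<partial>\<mu>)"
    using assms unfolding is_laplace_transform_def by blast
  have "(\<lambda>x. x) \<in> borel_measurable \<mu>"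
    using \<mu>(2) by (simp add: measurable_ident_sets)
  from laplace_integral_bounds(2,3)[OF \<mu>(1) this \<mu>(3)] \<mu>(4)
  show "\<And>s. 0 \<le> s \<Longrightarrow> 0 \<le> \<phi> s \<and> \<phi> s \<le> 1" by simp
  show "\<phi> 0 = 1" using \<mu>(4) prob_space.prob_space[OF \<mu>(1)] by simp
qed

lemma is_laplace_transform_rv:
  assumes "prob_space M" "Y \<in> borel_measurable M" "AE \<omega> in M. 0 \<le> Y \<omega>"
    and "\<forall>s\<ge>0. L s = (\<integral>\<omega>. exp (- (s * Y \<omega>)) \<partial>M)"
  shows "is_laplace_transform L"
  unfolding is_laplace_transform_def
proof (intro exI conjI allI impI)
  show "prob_space (distr M borel Y)"
    using prob_space.prob_space_distr[OF assms(1,2)] .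
  show "sets (distr M borel Y) = sets borel" by simp
  show "AE x in distr M borel Y. 0 \<le> x"
    using assms(2,3) by (subst AE_distr_iff) auto
  fix s :: real assume "0 \<le> s"
  then show "L s = (\<integral>x. exp (- (s * x)) \<partial>distr M borel Y)"
    using assms(2,4) by (subst integral_distr) auto
qed

lemma power_diff_le_unit:
  fixes x y :: real
  assumes "0 \<le> x" "x \<le> 1" "0 \<le> y" "y \<le> 1"
  shows "\<bar>x ^ n - y ^ n\<bar> \<le> real n * \<bar>x - y\<bar>"
proof (induction n)
  case 0 then show ?case by simp
next
  case (Suc n)
  have "x ^ Suc n - y ^ Suc n = x * (x ^ n - y ^ n) + y ^ n * (x - y)"
    by (simp add: algebra_simps)
  then have "\<bar>x ^ Suc n - y ^ Suc n\<bar> \<le> x * \<bar>x ^ n - y ^ n\<bar> + y ^ n * \<bar>x - y\<bar>"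
    using assms by (simp add: abs_mult order_trans[OF abs_triangle_ineq])
  also have "\<dots> \<le> 1 * (real n * \<bar>x - y\<bar>) + 1 * \<bar>x - y\<bar>"
    using assms Suc by (intro add_mono mult_mono) (auto simp: power_le_one)
  finally show ?case by (simp add: algebra_simps)
qed

lemma ereal_SUP_finite_bound:
  assumes "(SUP s\<in>A. ereal (f s)) < \<infinity>" "A \<noteq> {}"
  obtains C where "\<And>s. s \<in> A \<Longrightarrow> f s \<le> C"
proof -
  obtain s0 where "s0 \<in> A" using assms(2) by blast
  then have "ereal (f s0) \<le> (SUP s\<in>A. ereal (f s))" by (rule SUP_upper)
  then obtain C where C: "(SUP s\<in>A. ereal (f s)) = ereal C"
    using assms(1) by (cases "SUP s\<in>A. ereal (f s)") auto
  show ?thesis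
  proof
    fix s assume "s \<in> A"
    then have "ereal (f s) \<le> ereal C" unfolding C[symmetric] by (rule SUP_upper)
    then show "f s \<le> C" by simp
  qed
qed

lemma ereal_SUP_tendsto_zero_bound:
  assumes "(\<lambda>n. SUP s\<in>A. ereal (f n s)) \<longlonglongrightarrow> 0"
  obtains r where "r \<longlonglongrightarrow> 0" and "eventually (\<lambda>n. \<forall>s\<in>A. f n s \<le> r n) sequentially"
proof
  define D where "D n = (SUP s\<in>A. ereal (f n s))" for n
  have "D \<longlonglongrightarrow> ereal 0" using assms unfolding D_def zero_ereal_def .
  then show "(\<lambda>n. real_of_ereal (D n)) \<longlonglongrightarrow> 0" by simp
  have "eventually (\<lambda>n. D n < 1) sequentially"
    using order_tendstoD(2)[OF \<open>D \<longlonglongrightarrow> ereal 0\<close>, of 1] by simp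
  then show "eventually (\<lambda>n. \<forall>s\<in>A. f n s \<le> real_of_ereal (D n)) sequentially"
  proof eventually_elim
    case (elim n)
    show ?case
    proof
      fix s assume "s \<in> A"
      then have "ereal (f n s) \<le> D n" unfolding D_def by (rule SUP_upper)
      with elim show "f n s \<le> real_of_ereal (D n)" by (cases "D n") auto
    qed
  qed
qed

lemma normalized_power_tendsto:
  fixes L h :: "real \<Rightarrow> real" and g :: "nat \<Rightarrow> real \<Rightarrow> real" and a s :: real
  assumes L_range: "\<And>u. 0 \<le> u \<Longrightarrow> 0 \<le> L u \<and> L u \<le> 1"
    and h_range: "\<And>u. 0 \<le> u \<Longrightarrow> 0 \<le> h u \<and> h u \<le> 1"
    and h0_L0: "h 0 = L 0"
    and g0: "\<And>n. n \<ge> 1 \<Longrightarrow> g n 0 = 1"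
    and g_bij: "\<And>n. n \<ge> 1 \<Longrightarrow> bij_betw (g n) {0..} {0<..1}"
    and L_stable: "\<And>n t. n \<ge> 1 \<Longrightarrow> 0 \<le> t \<Longrightarrow> L t = (L (- ln (g n t))) ^ n"
    and h_close: "(SUP u\<in>{0<..}. ereal (\<bar>h u - L u\<bar> / u powr a)) < \<infinity>"
    and g_growth: "(\<lambda>n. SUP u\<in>{0<..}. ereal (real n * u powr a
                      / \<bar>the_inv_into {0..} (g n) (exp (- u))\<bar> powr a)) \<longlonglongrightarrow> 0"
    and s: "0 \<le> s"
  shows "(\<lambda>n. h (- ln (g n s)) ^ n) \<longlonglongrightarrow> L s"
proof -
  obtain C where C: "\<And>u. u \<in> {0<..} \<Longrightarrow> \<bar>h u - L u\<bar> / u powr a \<le> C"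
    by (rule ereal_SUP_finite_bound[OF h_close]) auto
  have C_nonneg: "0 \<le> C"
    using C[of 1] abs_ge_zero[of "h 1 - L 1"] by simp
  have h_near_L: "\<bar>h u - L u\<bar> \<le> C * u powr a" if "0 \<le> u" for u
  proof (cases "u = 0")
    case True
    then show ?thesis using h0_L0 by simp
  next
    case False
    then have "0 < u powr a" "\<bar>h u - L u\<bar> / u powr a \<le> C" using C[of u] that by auto
    then show ?thesis by (simp add: divide_le_eq mult.commute)
  qed
  obtain r where r: "r \<longlonglongrightarrow> 0" and r_bound: "eventually (\<lambda>n. \<forall>u\<in>{0<..}.
      real n * u powr a / \<bar>the_inv_into {0..} (g n) (exp (- u))\<bar> powr a \<le> r n) sequentially"
    using ereal_SUP_tendsto_zero_bound[OF g_growth] by blast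
  have exponent_bound: "real n * (- ln (g n s)) powr a \<le> r n * s powr a \<and> 0 \<le> - ln (g n s)"
    if n: "n \<ge> 1" and rn: "\<forall>u\<in>{0<..}. real n * u powr a
          / \<bar>the_inv_into {0..} (g n) (exp (- u))\<bar> powr a \<le> r n" for n
  proof -
    define u where "u = - ln (g n s)"
    have g_range: "0 < g n s" "g n s \<le> 1"
      using bij_betwE[OF g_bij[OF n]] s by auto
    show ?thesis
    proof (cases "s = 0")
      case True
      then show ?thesis using g0[OF n] by simp
    next
      case False
      have inj: "inj_on (g n) {0..}" using bij_betw_imp_inj_on[OF g_bij[OF n]] .
      have "g n s \<noteq> 1" using inj_onD[OF inj, of s 0] g0[OF n] s False by auto
      then have u_pos: "0 < u" unfolding u_def using g_range by simp
      have "exp (- u) = g n s" unfolding u_def using g_range by simp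
      then have "the_inv_into {0..} (g n) (exp (- u)) = s"
        using the_inv_into_f_f[OF inj] s by simp
      moreover have "real n * u powr a
          / \<bar>the_inv_into {0..} (g n) (exp (- u))\<bar> powr a \<le> r n"
        using rn u_pos by simp
      ultimately have "real n * u powr a / s powr a \<le> r n"
        using s by simp
      moreover have "0 < s powr a" using s False by simp
      ultimately show ?thesis using u_pos unfolding u_def by (simp add: divide_le_eq)
    qed
  qed
  have "(\<lambda>n. h (- ln (g n s)) ^ n - L s) \<longlonglongrightarrow> 0"
  proof (rule Lim_null_comparison)
    show "(\<lambda>n. C * s powr a * r n) \<longlonglongrightarrow> 0" using r by (intro tendsto_mult_right_zero)
    show "eventually (\<lambda>n. norm (h (- ln (g n s)) ^ n - L s) \<le> C * s powr a * r n) sequentially"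
      using r_bound eventually_ge_at_top[of "1::nat"]
    proof eventually_elim
      case (elim n)
      define u where "u = - ln (g n s)"
      have u: "real n * u powr a \<le> r n * s powr a" "0 \<le> u"
        using exponent_bound[OF elim(2,1)] unfolding u_def by auto
      have "norm (h u ^ n - L s) = \<bar>h u ^ n - L u ^ n\<bar>"
        using L_stable[OF elim(2) s] unfolding u_def by simp
      also have "\<dots> \<le> real n * \<bar>h u - L u\<bar>"
        using h_range[OF u(2)] L_range[OF u(2)] by (intro power_diff_le_unit) auto
      also have "\<dots> \<le> real n * (C * u powr a)"
        using h_near_L[OF u(2)] by (rule mult_left_mono) simp
      also have "\<dots> = C * (real n * u powr a)" by simp
      also have "\<dots> \<le> C * (r n * s powr a)"
        using u(1) C_nonneg by (rule mult_left_mono)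
      finally show ?case unfolding u_def by (simp add: mult_ac)
    qed
  qed
  then show ?thesis by (simp add: Lim_null[symmetric])
qed

lemma laplace_indep_sum:
  fixes X :: "'i \<Rightarrow> 'a \<Rightarrow> real"
  assumes "prob_space \<Omega>" "finite I"
    and indep: "prob_space.indep_vars \<Omega> (\<lambda>_. borel) X I"
    and meas: "\<And>j. j \<in> I \<Longrightarrow> X j \<in> borel_measurable \<Omega>"
    and nonneg: "\<And>j. j \<in> I \<Longrightarrow> AE \<omega> in \<Omega>. 0 \<le> X j \<omega>"
    and s: "0 \<le> s"
  shows "(\<integral>\<omega>. exp (- (s * (\<Sum>j\<in>I. X j \<omega>))) \<partial>\<Omega>) = (\<Prod>j\<in>I. \<integral>\<omega>. exp (- (s * X j \<omega>)) \<partial>\<Omega>)"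
proof -
  interpret prob_space \<Omega> by fact
  have exp_sum_eq: "exp (- (s * (\<Sum>j\<in>I. X j \<omega>))) = (\<Prod>j\<in>I. exp (- (s * X j \<omega>)))" for \<omega>
    using \<open>finite I\<close> by (simp add: sum_distrib_left sum_negf[symmetric] exp_sum)
  have "indep_vars (\<lambda>_. borel) (\<lambda>j \<omega>. exp (- (s * X j \<omega>))) I"
    by (rule indep_vars_compose2[OF indep]) auto
  then show ?thesis
    unfolding exp_sum_eq
    by (rule indep_vars_lebesgue_integral[OF \<open>finite I\<close>])
       (use laplace_integral_bounds(1)[OF \<open>prob_space \<Omega>\<close> meas nonneg s] in auto)
qed

section \<open>A continuity theorem for Laplace transforms\<close>

text \<open>For [0,1]-valued random variables, convergence of all moments implies
  convergence of the expectations of every bounded continuous function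
  (Weierstrass approximation on [0,1]).\<close>
lemma moment_conv_imp_integral_conv:
  fixes N :: "nat \<Rightarrow> 'a measure" and M0 :: "'b measure" and Z :: "nat \<Rightarrow> 'a \<Rightarrow> real"
    and Z0 :: "'b \<Rightarrow> real" and \<phi> :: "real \<Rightarrow> real"
  assumes N: "\<And>n. prob_space (N n)" and M0: "prob_space M0"
    and Z_meas: "\<And>n. Z n \<in> borel_measurable (N n)" and Z0_meas: "Z0 \<in> borel_measurable M0"
    and Z_range: "\<And>n. AE \<omega> in N n. Z n \<omega> \<in> {0..1}" and Z0_range: "AE \<omega> in M0. Z0 \<omega> \<in> {0..1}"
    and moments: "\<And>k. (\<lambda>n. \<integral>\<omega>. Z n \<omega> ^ k \<partial>N n) \<longlonglongrightarrow> (\<integral>\<omega>. Z0 \<omega> ^ k \<partial>M0)"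
    and \<phi>_cont: "continuous_on UNIV \<phi>" and \<phi>_bound: "\<And>x. \<bar>\<phi> x\<bar> \<le> B"
  shows "(\<lambda>n. \<integral>\<omega>. \<phi> (Z n \<omega>) \<partial>N n) \<longlonglongrightarrow> (\<integral>\<omega>. \<phi> (Z0 \<omega>) \<partial>M0)"
proof (rule tendstoI)
  fix e :: real assume e: "0 < e"
  have \<phi>_meas: "\<phi> \<in> borel_measurable borel" using \<phi>_cont by (rule borel_measurable_continuous_onI)
  obtain p where "real_polynomial_function p" and p_approx: "\<And>x. x \<in> {0..1} \<Longrightarrow> \<bar>\<phi> x - p x\<bar> < e/3"
    using Stone_Weierstrass_real_polynomial_function[of "{0..1::real}" \<phi> "e/3"] e
      continuous_on_subset[OF \<phi>_cont] by auto
  then obtain c m where p: "p = (\<lambda>x. \<Sum>i\<le>m. c i * x ^ i)"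
    using real_polynomial_function_iff_sum by blast
  have p_integral: "integrable Q (\<lambda>\<omega>. p (W \<omega>))"
      "(\<integral>\<omega>. p (W \<omega>) \<partial>Q) = (\<Sum>i\<le>m. c i * \<integral>\<omega>. W \<omega> ^ i \<partial>Q)"
    and \<phi>_p_close: "\<bar>(\<integral>\<omega>. \<phi> (W \<omega>) \<partial>Q) - (\<integral>\<omega>. p (W \<omega>) \<partial>Q)\<bar> \<le> e/3"
    if Q: "prob_space Q" and W: "W \<in> borel_measurable Q" "AE \<omega> in Q. W \<omega> \<in> {0..1}"
    for Q :: "'c measure" and W :: "'c \<Rightarrow> real"
  proof -
    interpret prob_space Q by fact
    have "integrable Q (\<lambda>\<omega>. W \<omega> ^ i)" for i
    proof (rule integrable_const_bound[where B=1])
      show "AE \<omega> in Q. norm (W \<omega> ^ i) \<le> 1"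
        using W(2) by eventually_elim (auto simp: power_le_one)
    qed (use W(1) in simp)
    then show p_int: "integrable Q (\<lambda>\<omega>. p (W \<omega>))"
      and "(\<integral>\<omega>. p (W \<omega>) \<partial>Q) = (\<Sum>i\<le>m. c i * \<integral>\<omega>. W \<omega> ^ i \<partial>Q)"
      unfolding p by (auto simp: integral_sum)
    have \<phi>_int: "integrable Q (\<lambda>\<omega>. \<phi> (W \<omega>))"
      by (rule integrable_const_bound[where B=B]) (use W \<phi>_bound \<phi>_meas in auto)
    have "\<bar>\<integral>\<omega>. \<phi> (W \<omega>) - p (W \<omega>) \<partial>Q\<bar> \<le> (\<integral>\<omega>. \<bar>\<phi> (W \<omega>) - p (W \<omega>)\<bar> \<partial>Q)"
      using integral_norm_bound[of Q] by simp
    also have "\<dots> \<le> (\<integral>\<omega>. e/3 \<partial>Q)"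
    proof (rule integral_mono_AE)
      show "AE \<omega> in Q. \<bar>\<phi> (W \<omega>) - p (W \<omega>)\<bar> \<le> e/3"
        using W(2) by eventually_elim (use p_approx in \<open>auto intro: less_imp_le\<close>)
    qed (use \<phi>_int p_int in auto)
    finally show "\<bar>(\<integral>\<omega>. \<phi> (W \<omega>) \<partial>Q) - (\<integral>\<omega>. p (W \<omega>) \<partial>Q)\<bar> \<le> e/3"
      using \<phi>_int p_int by (simp add: prob_space)
  qed
  have "(\<lambda>n. \<integral>\<omega>. p (Z n \<omega>) \<partial>N n) \<longlonglongrightarrow> (\<integral>\<omega>. p (Z0 \<omega>) \<partial>M0)"
    unfolding p_integral(2)[OF N Z_meas Z_range] p_integral(2)[OF M0 Z0_meas Z0_range]
    by (intro tendsto_sum tendsto_mult_left moments)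
  then have "eventually (\<lambda>n. dist (\<integral>\<omega>. p (Z n \<omega>) \<partial>N n) (\<integral>\<omega>. p (Z0 \<omega>) \<partial>M0) < e/3) sequentially"
    by (rule tendstoD) (use e in simp)
  then show "eventually (\<lambda>n. dist (\<integral>\<omega>. \<phi> (Z n \<omega>) \<partial>N n) (\<integral>\<omega>. \<phi> (Z0 \<omega>) \<partial>M0) < e) sequentially"
  proof eventually_elim
    case (elim n)
    with \<phi>_p_close[OF N Z_meas Z_range, of n] \<phi>_p_close[OF M0 Z0_meas Z0_range] show ?case
      by (simp add: dist_real_def) (smt (verit))
  qed
qed

lemma cts_step_as_function_of_exp:
  fixes x y :: real
  assumes "x < y"
  obtains \<phi> where "continuous_on UNIV \<phi>" "\<And>z. \<bar>\<phi> z\<bar> \<le> 1"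
    "\<And>t. cts_step x y t = \<phi> (exp (- t))"
proof
  define \<phi> where "\<phi> z = cts_step x y (- ln (max z (exp (- y))))" for z
  have "continuous_on UNIV (cts_step x y)"
    using uniformly_continuous_imp_continuous[OF cts_step_uniformly_continuous[OF assms]] .
  moreover have "continuous_on UNIV (\<lambda>z. - ln (max z (exp (- y))))"
    by (intro continuous_intros) (auto simp: max_def)
  ultimately show "continuous_on UNIV \<phi>"
    unfolding \<phi>_def by (rule continuous_on_compose2) auto
  show "\<bar>\<phi> z\<bar> \<le> 1" for z
    unfolding \<phi>_def cts_step_def using assms by (auto simp: divide_simps)
  show "cts_step x y t = \<phi> (exp (- t))" for t
  proof -
    have "max (exp (- t)) (exp (- y)) = exp (- min t y)" by (auto simp: max_def min_def)
    then show ?thesis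
      unfolding \<phi>_def cts_step_def using assms by (auto simp: min_def)
  qed
qed

lemma laplace_conv_imp_weak_conv:
  fixes N :: "nat \<Rightarrow> 'a measure" and M0 :: "'b measure" and Z :: "nat \<Rightarrow> 'a \<Rightarrow> real"
    and Z0 :: "'b \<Rightarrow> real"
  assumes N: "\<And>n. prob_space (N n)" and M0: "prob_space M0"
    and Z_meas: "\<And>n. Z n \<in> borel_measurable (N n)" and Z0_meas: "Z0 \<in> borel_measurable M0"
    and Z_nonneg: "\<And>n. AE \<omega> in N n. 0 \<le> Z n \<omega>" and Z0_nonneg: "AE \<omega> in M0. 0 \<le> Z0 \<omega>"
    and laplace: "\<And>k::nat. (\<lambda>n. \<integral>\<omega>. exp (- (k * Z n \<omega>)) \<partial>N n) \<longlonglongrightarrow> (\<integral>\<omega>. exp (- (k * Z0 \<omega>)) \<partial>M0)"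
  shows "weak_conv_m (\<lambda>n. distr (N n) borel (Z n)) (distr M0 borel Z0)"
proof (rule integral_cts_step_conv_imp_weak_conv)
  show "real_distribution (distr (N n) borel (Z n))" for n
    using prob_space.real_distribution_distr[OF N Z_meas] by simp
  show "real_distribution (distr M0 borel Z0)"
    using prob_space.real_distribution_distr[OF M0 Z0_meas] by simp
  fix x y :: real assume "x < y"
  obtain \<phi> where \<phi>: "continuous_on UNIV \<phi>" "\<And>z. \<bar>\<phi> z\<bar> \<le> 1"
    and step_eq: "\<And>t. cts_step x y t = \<phi> (exp (- t))"
    using cts_step_as_function_of_exp[OF \<open>x < y\<close>] by blast
  have step_meas: "cts_step x y \<in> borel_measurable borel"
    using uniformly_continuous_imp_continuous[OF cts_step_uniformly_continuous[OF \<open>x < y\<close>]]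
    by (rule borel_measurable_continuous_onI)
  have exp_power: "exp (- t) ^ k = exp (- (real k * t))" for t :: real and k
    by (simp add: exp_of_nat_mult[symmetric])
  have "(\<lambda>n. \<integral>\<omega>. \<phi> (exp (- Z n \<omega>)) \<partial>N n) \<longlonglongrightarrow> (\<integral>\<omega>. \<phi> (exp (- Z0 \<omega>)) \<partial>M0)"
    by (rule moment_conv_imp_integral_conv[OF N M0 _ _ _ _ _ \<phi>])
       (use Z_meas Z0_meas Z_nonneg Z0_nonneg laplace in
        \<open>auto simp: exp_power elim!: eventually_mono\<close>)
  then show "(\<lambda>n. integral\<^sup>L (distr (N n) borel (Z n)) (cts_step x y))
      \<longlonglongrightarrow> integral\<^sup>L (distr M0 borel Z0) (cts_step x y)"
    using Z_meas Z0_meas by (simp add: integral_distr[OF _ step_meas] step_eq)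
qed

lemma weak_conv_m_Suc:
  assumes "weak_conv_m (\<lambda>n. F (Suc n)) G"
  shows "weak_conv_m F G"
  using assms unfolding weak_conv_m_def weak_conv_def
  by (auto intro: LIMSEQ_imp_Suc)

theorem mainTheorem1:
  fixes M :: "'b measure" and Y :: "'b \<Rightarrow> real" and L :: "real \<Rightarrow> real"
    and g :: "nat \<Rightarrow> real \<Rightarrow> real" and h :: "real \<Rightarrow> real" and a :: real
    and \<Omega> :: "nat \<Rightarrow> 'a measure" and Xt :: "nat \<Rightarrow> nat \<Rightarrow> 'a \<Rightarrow> real"
  assumes M: "prob_space M"
    and Y_meas: "Y \<in> borel_measurable M"
    and Y_nonneg: "AE \<omega> in M. 0 \<le> Y \<omega>"
    and L_def: "\<forall>s\<ge>0. L s = (\<integral>\<omega>. exp (- (s * Y \<omega>)) \<partial>M)"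
    and g_LT: "\<forall>n\<ge>1. is_laplace_transform (g n)"
    and g_cont: "\<forall>n\<ge>1. continuous_on {0..} (g n)"
    and g_decr: "\<forall>n\<ge>1. \<forall>x y. 0 \<le> x \<longrightarrow> x < y \<longrightarrow> g n y < g n x"
    and g_bij: "\<forall>n\<ge>1. bij_betw (g n) {0..} {0<..1}"
    and L_stable: "\<forall>n\<ge>1. \<forall>s\<ge>0. L s = (L (- ln (g n s))) ^ n"
    and h_LT: "is_laplace_transform h"
    and a_pos: "a > 0"
    and h_close: "(SUP s\<in>{0<..}. ereal (\<bar>h s - L s\<bar> / s powr a)) < \<infinity>"
    and g_growth: "(\<lambda>n. SUP s\<in>{0<..}. ereal (real n * s powr a
                      / \<bar>the_inv_into {0..} (g n) (exp (- s))\<bar> powr a)) \<longlonglongrightarrow> 0"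
    and \<Omega>_prob: "\<forall>n\<ge>1. prob_space (\<Omega> n)"
    and Xt_meas: "\<forall>n\<ge>1. \<forall>j\<in>{1..n}. Xt n j \<in> borel_measurable (\<Omega> n)"
    and Xt_indep: "\<forall>n\<ge>1. prob_space.indep_vars (\<Omega> n) (\<lambda>_. borel) (Xt n) {1..n}"
    and Xt_nonneg: "\<forall>n\<ge>1. \<forall>j\<in>{1..n}. AE \<omega> in \<Omega> n. 0 \<le> Xt n j \<omega>"
    and Xt_LT: "\<forall>n\<ge>1. \<forall>j\<in>{1..n}. \<forall>s\<ge>0.
                  (\<integral>\<omega>. exp (- (s * Xt n j \<omega>)) \<partial>\<Omega> n) = h (- ln (g n s))"
  shows "weak_conv_m (\<lambda>n. distr (\<Omega> n) borel (\<lambda>\<omega>. \<Sum>j\<in>{1..n}. Xt n j \<omega>))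
                     (distr M borel Y)"
proof -
  define S where "S n \<omega> = (\<Sum>j\<in>{1..n}. Xt n j \<omega>)" for n \<omega>
  have S_meas: "S n \<in> borel_measurable (\<Omega> n)" if "n \<ge> 1" for n
    unfolding S_def using Xt_meas that by (auto intro!: borel_measurable_sum)
  have S_nonneg: "AE \<omega> in \<Omega> n. 0 \<le> S n \<omega>" if "n \<ge> 1" for n
  proof -
    have "AE \<omega> in \<Omega> n. \<forall>j\<in>{1..n}. 0 \<le> Xt n j \<omega>"
      using Xt_nonneg that by (subst AE_finite_all) auto
    then show ?thesis unfolding S_def by eventually_elim (auto intro: sum_nonneg)
  qed
  have L_LT: "is_laplace_transform L" by (rule is_laplace_transform_rv[OF M Y_meas Y_nonneg L_def])
  have laplace_S: "(\<integral>\<omega>. exp (- (s * S n \<omega>)) \<partial>\<Omega> n) = h (- ln (g n s)) ^ n"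
    if "n \<ge> 1" "0 \<le> s" for n s
    using laplace_indep_sum[of "\<Omega> n" "{1..n}" "Xt n" s] \<Omega>_prob Xt_indep Xt_meas Xt_nonneg Xt_LT that
    by (simp add: S_def)
  have laplace_conv: "(\<lambda>n. h (- ln (g n s)) ^ n) \<longlonglongrightarrow> L s" if "0 \<le> s" for s
    using laplace_transform_range[OF L_LT] laplace_transform_range[OF h_LT]
      laplace_transform_range(1) g_LT g_bij L_stable h_close g_growth that
    by (intro normalized_power_tendsto[where a=a and g=g]) auto
  have "(\<lambda>n. \<integral>\<omega>. exp (- (real k * S (Suc n) \<omega>)) \<partial>\<Omega> (Suc n))
      \<longlonglongrightarrow> (\<integral>\<omega>. exp (- (real k * Y \<omega>)) \<partial>M)" for k :: nat
  proof -
    have "(\<lambda>n. h (- ln (g (Suc n) k)) ^ Suc n) \<longlonglongrightarrow> L k"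
      by (rule LIMSEQ_Suc[OF laplace_conv]) simp
    then show ?thesis using laplace_S L_def by simp
  qed
  then have "weak_conv_m (\<lambda>n. distr (\<Omega> (Suc n)) borel (S (Suc n))) (distr M borel Y)"
    using \<Omega>_prob S_meas S_nonneg
    by (intro laplace_conv_imp_weak_conv[OF _ M _ Y_meas _ Y_nonneg]) auto
  then show ?thesis unfolding S_def by (rule weak_conv_m_Suc)
qed

end
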